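(* The saturation of a finite sample set is finite.
   Context: Basic terms are built from a countably infinite set of variables using binary $\cdot$, unary ${}'$ and constant $1$. Fix a countably infinite set of time variables. Samples are the formal expressions generated by the grammar $\alpha::=\kappa\mid t[\alpha]\mid\mathrm{suc}(\alpha)\mid\mathrm{last}(t)$, where $\kappa$ is a time variable and $t$ a basic term. Let $\leadsto$ be the binary relation on samples given by: $t[\alpha]\leadsto\alpha$; $\mathrm{suc}(\alpha)\leadsto\alpha$; $t[\alpha]\leadsto t[\mathrm{last}(t)]$; $(tu)[\alpha]\leadsto t[u[\alpha]]$; $t'[\alpha]\leadsto t[t'[\alpha]]$; $t'[\alpha]\leadsto t[\mathrm{suc}(t'[\alpha])]$. The saturation of a set $\Delta$ of samples is $\{\beta\mid\alpha\leadsto^*\beta\text{ for some }\alpha\in\Delta\}$, where $\leadsto^*$ is the reflexive transitive closure of $\leadsto$. *)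

theory Defs
  imports Main
begin

text \<open>Basic terms over a countably infinite set of variables (modelled by nat).\<close>
datatype bterm = Var nat | Mul bterm bterm | Prime bterm | One

text \<open>Samples; time variables modelled by nat.\<close>
datatype sample = TVar nat | App bterm sample | Suc_s sample | Last bterm

inductive step :: "sample \<Rightarrow> sample \<Rightarrow> bool" where
  app_arg: "step (App t a) a"
| suc_arg: "step (Suc_s a) a"
| app_last: "step (App t a) (App t (Last t))"
| app_mul: "step (App (Mul t u) a) (App t (App u a))"
| app_prime: "step (App (Prime t) a) (App t (App (Prime t) a))"
| app_prime_suc: "step (App (Prime t) a) (App t (Suc_s (App (Prime t) a)))"

definition saturation :: "sample set \<Rightarrow> sample set" where
  "saturation \<Delta> = {b. \<exists>a\<in>\<Delta>. step\<^sup>*\<^sup>* a b}"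

end

theory Submission
  imports Defs
begin

text \<open>The saturation of a set is the union of the saturations of its elements, so it suffices
  to show, by structural induction on a sample, that only finitely many samples are reachable
  from it. The one nontrivial case is \<open>t[a]\<close>. Every step from \<open>t[c]\<close> either returns \<open>c\<close>,
  jumps to \<open>t[last t]\<close>, or applies a proper subterm of \<open>t\<close> to a new argument (\<open>u[c]\<close>,
  \<open>t'[c]\<close> or \<open>suc(t'[c])\<close>). Recursion on \<open>t\<close> therefore yields an explicit finite set
  \<open>app_closure t b\<close> containing \<open>t[b]\<close> that is closed under steps except for steps back to \<open>b\<close>;
  together with the saturation of \<open>{a}\<close>, the set \<open>app_closure t a\<close> is closed under steps.\<close>

lemma not_step_TVar: "\<not> step (TVar n) z"
  by (auto elim: step.cases)

lemma not_step_Last: "\<not> step (Last t) z"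
  by (auto elim: step.cases)

lemma step_App_cases:
  assumes "step (App t b) z"
  obtains "z = b" | "z = App t (Last t)"
  | t1 u1 where "t = Mul t1 u1" "z = App t1 (App u1 b)"
  | t1 where "t = Prime t1" "z = App t1 (App (Prime t1) b)"
  | t1 where "t = Prime t1" "z = App t1 (Suc_s (App (Prime t1) b))"
  using assms by (cases rule: step.cases) auto

lemma step_Suc_s_iff: "step (Suc_s a) z \<longleftrightarrow> z = a"
  by (auto elim: step.cases intro: step.intros)

fun app_closure :: "bterm \<Rightarrow> sample \<Rightarrow> sample set" where
  "app_closure (Mul t u) b =
     {Last (Mul t u)} \<union>
     (\<Union>c\<in>{b, Last (Mul t u)}. {App (Mul t u) c} \<union> app_closure u c \<union> app_closure t (App u c))"
| "app_closure (Prime t) b =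
     {Last (Prime t)} \<union>
     (\<Union>c\<in>{b, Last (Prime t)}. {App (Prime t) c, Suc_s (App (Prime t) c)}
        \<union> app_closure t (App (Prime t) c) \<union> app_closure t (Suc_s (App (Prime t) c)))"
| "app_closure t b = {App t b, App t (Last t), Last t}"

lemma finite_app_closure: "finite (app_closure t b)"
  by (induction t arbitrary: b) auto

lemma App_in_app_closure: "App t b \<in> app_closure t b"
  by (cases t) auto

lemma step_from_app_closure:
  "y \<in> app_closure t b \<Longrightarrow> step y z \<Longrightarrow> z \<in> insert b (app_closure t b)"
proof (induction t arbitrary: b y z)
  case (Mul t u)
  let ?S = "app_closure (Mul t u) b"
  have "z \<in> insert b ?S"
    if c: "c \<in> {b, Last (Mul t u)}"
      and y: "y \<in> {App (Mul t u) c} \<union> app_closure u c \<union> app_closure t (App u c)" for c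
  proof -
    have S: "c \<in> insert b ?S" "App (Mul t u) (Last (Mul t u)) \<in> ?S" "App u c \<in> ?S"
      "App t (App u c) \<in> ?S" "app_closure u c \<subseteq> ?S" "app_closure t (App u c) \<subseteq> ?S"
      using c App_in_app_closure by auto
    from y consider "y = App (Mul t u) c" | "y \<in> app_closure u c" | "y \<in> app_closure t (App u c)"
      by blast
    then show ?thesis
    proof cases
      case 1
      from Mul.prems(2)[unfolded 1] show ?thesis
        by (cases rule: step_App_cases) (use S in auto)
    next
      case 2
      with Mul.IH(2)[OF 2 Mul.prems(2)] S show ?thesis by blast
    next
      case 3
      with Mul.IH(1)[OF 3 Mul.prems(2)] S show ?thesis by blast
    qed
  qed
  moreover have "y \<noteq> Last (Mul t u)"
    using Mul.prems(2) not_step_Last by blast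
  ultimately show ?case
    using Mul.prems(1) by auto
next
  case (Prime t)
  let ?S = "app_closure (Prime t) b"
  have "z \<in> insert b ?S"
    if c: "c \<in> {b, Last (Prime t)}"
      and y: "y \<in> {App (Prime t) c, Suc_s (App (Prime t) c)}
        \<union> app_closure t (App (Prime t) c) \<union> app_closure t (Suc_s (App (Prime t) c))" for c
  proof -
    have S: "c \<in> insert b ?S" "App (Prime t) c \<in> ?S" "Suc_s (App (Prime t) c) \<in> ?S"
      "App (Prime t) (Last (Prime t)) \<in> ?S"
      "App t (App (Prime t) c) \<in> ?S" "App t (Suc_s (App (Prime t) c)) \<in> ?S"
      "app_closure t (App (Prime t) c) \<subseteq> ?S" "app_closure t (Suc_s (App (Prime t) c)) \<subseteq> ?S"
      using c App_in_app_closure by auto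
    from y consider "y = App (Prime t) c" | "y = Suc_s (App (Prime t) c)"
      | "y \<in> app_closure t (App (Prime t) c)" | "y \<in> app_closure t (Suc_s (App (Prime t) c))"
      by blast
    then show ?thesis
    proof cases
      case 1
      from Prime.prems(2)[unfolded 1] show ?thesis
        by (cases rule: step_App_cases) (use S in auto)
    next
      case 2
      with Prime.prems(2) show ?thesis using S by (simp add: step_Suc_s_iff)
    next
      case 3
      with Prime.IH[OF 3 Prime.prems(2)] S show ?thesis by blast
    next
      case 4
      with Prime.IH[OF 4 Prime.prems(2)] S show ?thesis by blast
    qed
  qed
  moreover have "y \<noteq> Last (Prime t)"
    using Prime.prems(2) not_step_Last by blast
  ultimately show ?case
    using Prime.prems(1) by auto
qed (auto simp: not_step_Last elim!: step_App_cases)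

definition step_closed :: "sample set \<Rightarrow> bool" where
  "step_closed S \<longleftrightarrow> (\<forall>y\<in>S. \<forall>z. step y z \<longrightarrow> z \<in> S)"

lemma saturation_subset_step_closed:
  assumes "\<Delta> \<subseteq> S" and "step_closed S"
  shows "saturation \<Delta> \<subseteq> S"
proof
  fix b
  assume "b \<in> saturation \<Delta>"
  then obtain a where "a \<in> \<Delta>" and "step\<^sup>*\<^sup>* a b"
    unfolding saturation_def by blast
  from \<open>step\<^sup>*\<^sup>* a b\<close> show "b \<in> S"
  proof (induction rule: rtranclp_induct)
    case base
    then show ?case
      using \<open>a \<in> \<Delta>\<close> assms(1) by blast
  next
    case (step y z)
    then show ?case
      using assms(2) unfolding step_closed_def by blast
  qed
qed

lemma step_closed_saturation: "step_closed (saturation \<Delta>)"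
  unfolding step_closed_def saturation_def
  by (blast intro: rtranclp.rtrancl_into_rtrancl)

lemma mem_saturation_singleton: "a \<in> saturation {a}"
  by (simp add: saturation_def)

lemma saturation_eq_UN_singleton: "saturation \<Delta> = (\<Union>a\<in>\<Delta>. saturation {a})"
  by (auto simp: saturation_def)

lemma saturation_singleton_if_no_step:
  assumes "\<And>z. \<not> step a z"
  shows "saturation {a} = {a}"
  using assms saturation_subset_step_closed[of "{a}" "{a}"] mem_saturation_singleton[of a]
  by (auto simp: step_closed_def)

lemma finite_saturation_singleton: "finite (saturation {a})"
proof (induction a)
  case (TVar n)
  then show ?case
    by (simp add: saturation_singleton_if_no_step not_step_TVar)
next
  case (Last t)
  then show ?case
    by (simp add: saturation_singleton_if_no_step not_step_Last)
next
  case (Suc_s a)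
  have "step_closed (insert (Suc_s a) (saturation {a}))"
    using step_closed_saturation mem_saturation_singleton
    by (auto simp: step_closed_def step_Suc_s_iff)
  then have "saturation {Suc_s a} \<subseteq> insert (Suc_s a) (saturation {a})"
    by (rule saturation_subset_step_closed[rotated]) simp
  then show ?case
    using Suc_s.IH finite_subset by blast
next
  case (App t a)
  have "step_closed (app_closure t a \<union> saturation {a})"
    using step_from_app_closure step_closed_saturation mem_saturation_singleton
    unfolding step_closed_def by blast
  then have "saturation {App t a} \<subseteq> app_closure t a \<union> saturation {a}"
    by (rule saturation_subset_step_closed[rotated]) (simp add: App_in_app_closure)
  then show ?case
    using App.IH finite_app_closure finite_subset by blast
qed

theorem lemma3p2:
  fixes \<Delta> :: "sample set"
  assumes "finite \<Delta>"
  shows "finite (saturation \<Delta>)"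
  unfolding saturation_eq_UN_singleton[of \<Delta>]
  by (intro finite_UN_I assms finite_saturation_singleton)

end
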